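(* Let $\Omega\subset\mathbb{R}^n$ ($1\le n\le 3$) be a bounded domain, let $\mu_1,\mu_2,\alpha>0$, and impose on $\Omega$ either the Dirichlet or the Neumann boundary condition. Let $\rho_k$, $e_k$, $\beta^{\pm}_k(\lambda)$, $\lambda_0$, $\lambda_1$ be as in the context. Then: (1) Suppose $\lambda_0<\lambda_1$, and let $k_0\ge 1$ be an integer such that the minimum in the definition of $\lambda_0$ is achieved at $\rho_{k_0}$. Then $\beta^+_{k_0}(\lambda)$ is the first real eigenvalue of the linearized eigenvalue problem near $\lambda=\lambda_0$, and for every $k\in\mathbb{N}$ with $\rho_k=\rho_{k_0}$: $\beta^+_k(\lambda)<0$ if $\lambda<\lambda_0$, $\beta^+_k(\lambda)=0$ if $\lambda=\lambda_0$, $\beta^+_k(\lambda)>0$ if $\lambda>\lambda_0$; and $\mathrm{Re}\,\beta^{\pm}_j(\lambda_0)<0$ for every eigenvalue $\beta^{\pm}_j$ other than the $\beta^+_k$ with $\rho_k=\rho_{k_0}$. (2) Suppose $\lambda_1<\lambda_0$. Then $\beta^+_1(\lambda)=\overline{\beta^-_1(\lambda)}$ is a pair of first complex eigenvalues of the linearized eigenvalue problem near $\lambda=\lambda_1$, with $\mathrm{Re}\,\beta^+_1(\lambda)=\mathrm{Re}\,\beta^-_1(\lambda)$ being $<0$ if $\lambda<\lambda_1$, $=0$ if $\lambda=\lambda_1$, $>0$ if $\lambda>\lambda_1$; and $\mathrm{Re}\,\beta^{\pm}_k(\lambda_1)<0$ for all $k>1$.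
   Context: Linearized eigenvalue problem (for parameter $\lambda>0$): find $\beta$ and $v=(v_1,v_2)\neq 0$ with $\mu_1\Delta v_1+(\lambda-1)v_1+\alpha^2v_2=\beta v_1$, $\mu_2\Delta v_2-\lambda v_1-\alpha^2 v_2=\beta v_2$ in $\Omega$, with $v=0$ on $\partial\Omega$ (Dirichlet) or $\partial v/\partial n=0$ on $\partial\Omega$ (Neumann). Let $\rho_k$ ($k=1,2,\dots$, nondecreasing, repeated with multiplicity) and $e_k$ be the eigenvalues and eigenfunctions of $-\Delta e_k=\rho_k e_k$ with the same boundary condition. Let $M_k=\begin{pmatrix}-\mu_1\rho_k+\lambda-1&\alpha^2\\-\lambda&-\mu_2\rho_k-\alpha^2\end{pmatrix}$. All eigenvalues of the linearized problem are the eigenvalues $\beta^{\pm}_k(\lambda)$ of the matrices $M_k$, with eigenfunctions $\xi^{\pm}_k e_k$ where $M_k\xi^{\pm}_k=\beta^{\pm}_k\xi^{\pm}_k$, explicitly $\beta^{\pm}_k(\lambda)=\tfrac12[\lambda-(\mu_1\rho_k+\mu_2\rho_k+\alpha^2+1)]\pm\tfrac12\big[(\lambda-\mu_1\rho_k-\mu_2\rho_k-\alpha^2-1)^2+4(\lambda\mu_2\rho_k-(\mu_1\rho_k+1)(\mu_2\rho_k+\alpha^2))\big]^{1/2}$. Define $\lambda_0=\min_{\rho_k}\frac{1}{\mu_2\rho_k}(\mu_1\rho_k+1)(\mu_2\rho_k+\alpha^2)$ (terms with $\rho_k=0$ are interpreted as $+\infty$) and $\lambda_1=\mu_1\rho_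1+\mu_2\rho_1+\alpha^2+1$.
   Formalization: Part (1) assumes in addition that the minimum in the definition of $\lambda_0$ is achieved only at eigenvalues $\rho_k$ equal to $\rho_{k_0}$. The statement above fails without it. *)

theory Defs
  imports "HOL-Analysis.Analysis"
begin

datatype bc = Dirichlet | Neumann

text \<open>Abstract properties of the eigenvalue sequence rho 1 <= rho 2 <= ... (indexed from 1,
  repeated with multiplicity) of the Laplacian -Delta on a bounded (connected) domain with
  the boundary condition b: nonnegative, nondecreasing, tending to infinity, the first
  eigenvalue is simple, positive for Dirichlet and zero for Neumann.\<close>
definition laplace_spectrum :: "bc \<Rightarrow> (nat \<Rightarrow> real) \<Rightarrow> bool" where
  "laplace_spectrum b rho \<longleftrightarrow>
     (\<forall>k\<ge>1. 0 \<le> rho k) \<and>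
     (\<forall>k\<ge>1. rho k \<le> rho (Suc k)) \<and>
     filterlim rho at_top sequentially \<and>
     rho 1 < rho 2 \<and>
     (b = Dirichlet \<longrightarrow> 0 < rho 1) \<and>
     (b = Neumann \<longrightarrow> rho 1 = 0)"

definition Mmat :: "real \<Rightarrow> real \<Rightarrow> real \<Rightarrow> real \<Rightarrow> real \<Rightarrow> real^2^2" where
  "Mmat mu1 mu2 alpha r lam =
     (\<chi> i j. if i = 1 then (if j = 1 then - mu1 * r + lam - 1 else alpha\<^sup>2)
             else (if j = 1 then - lam else - mu2 * r - alpha\<^sup>2))"

definition trM :: "real \<Rightarrow> real \<Rightarrow> real \<Rightarrow> real \<Rightarrow> real \<Rightarrow> real" where
  "trM mu1 mu2 alpha r lam = lam - (mu1 * r + mu2 * r + alpha\<^sup>2 + 1)"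

definition discr :: "real \<Rightarrow> real \<Rightarrow> real \<Rightarrow> real \<Rightarrow> real \<Rightarrow> real" where
  "discr mu1 mu2 alpha r lam =
     (lam - mu1 * r - mu2 * r - alpha\<^sup>2 - 1)\<^sup>2
     + 4 * (lam * mu2 * r - (mu1 * r + 1) * (mu2 * r + alpha\<^sup>2))"

text \<open>beta^+ and beta^- (the eigenvalues of M_k) by the explicit formula; the square root
  of a negative discriminant is the principal complex square root.\<close>
definition beta_plus :: "real \<Rightarrow> real \<Rightarrow> real \<Rightarrow> real \<Rightarrow> real \<Rightarrow> complex" where
  "beta_plus mu1 mu2 alpha r lam =
     complex_of_real (trM mu1 mu2 alpha r lam) / 2
     + csqrt (complex_of_real (discr mu1 mu2 alpha r lam)) / 2"

definition beta_minus :: "real \<Rightarrow> real \<Rightarrow> real \<Rightarrow> real \<Rightarrow> real \<Rightarrow> complex" where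
  "beta_minus mu1 mu2 alpha r lam =
     complex_of_real (trM mu1 mu2 alpha r lam) / 2
     - csqrt (complex_of_real (discr mu1 mu2 alpha r lam)) / 2"

text \<open>The function whose minimum over positive rho_k defines lambda_0
  (terms with rho_k = 0 are +infinity and hence excluded).\<close>
definition gfun :: "real \<Rightarrow> real \<Rightarrow> real \<Rightarrow> real \<Rightarrow> real" where
  "gfun mu1 mu2 alpha r = (mu1 * r + 1) * (mu2 * r + alpha\<^sup>2) / (mu2 * r)"

definition lambda0 :: "real \<Rightarrow> real \<Rightarrow> real \<Rightarrow> (nat \<Rightarrow> real) \<Rightarrow> real" where
  "lambda0 mu1 mu2 alpha rho = (INF k\<in>{k. 1 \<le> k \<and> 0 < rho k}. gfun mu1 mu2 alpha (rho k))"

definition lambda1 :: "real \<Rightarrow> real \<Rightarrow> real \<Rightarrow> (nat \<Rightarrow> real) \<Rightarrow> real" where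
  "lambda1 mu1 mu2 alpha rho = mu1 * rho 1 + mu2 * rho 1 + alpha\<^sup>2 + 1"

end

theory Submission
  imports Defs
begin

text \<open>The eigenvalues of \<open>M\<^sub>k\<close> are the roots of \<open>x\<^sup>2 - T\<^sub>k x + D\<^sub>k\<close>, where
  \<open>T\<^sub>k \<le> \<lambda> - \<lambda>\<^sub>1\<close> and \<open>D\<^sub>k = \<mu>\<^sub>2 \<rho>\<^sub>k (gfun \<rho>\<^sub>k - \<lambda>)\<close> (and \<open>D\<^sub>k = \<alpha>\<^sup>2 > 0\<close> if \<open>\<rho>\<^sub>k = 0\<close>).
  While the roots are complex, \<open>Re \<beta>\<^sup>+\<^sub>k = T\<^sub>k/2\<close>; a real root crosses zero exactly when \<open>D\<^sub>k\<close> does,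
  i.e. at \<open>\<lambda> = gfun \<rho>\<^sub>k \<ge> \<lambda>\<^sub>0\<close>. So the first crossing happens at the smaller of \<open>\<lambda>\<^sub>0\<close> and \<open>\<lambda>\<^sub>1\<close>.

  Dominance of the critical eigenvalue near the crossing is checked on the characteristic
  polynomial: the larger root lies below \<open>x\<close> as soon as \<open>T \<le> 2x\<close> and \<open>x\<^sup>2 - T x + D \<ge> 0\<close>.
  In the real case the characteristic polynomials of \<open>M\<^sub>k\<close> and \<open>M\<^sub>k\<^sub>0\<close> differ by \<open>\<rho>\<^sub>k - \<rho>\<^sub>k\<^sub>0\<close>
  times a slope that is increasing in \<open>\<rho>\<^sub>k\<close> and has the sign of \<open>\<rho>\<^sub>k - \<rho>\<^sub>k\<^sub>0\<close> at \<open>\<lambda>\<^sub>0\<close>;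
  since only finitely many \<open>\<rho>\<^sub>k\<close> lie below \<open>\<rho>\<^sub>k\<^sub>0\<close>, continuity preserves these signs nearby.\<close>

text \<open>Real part of the larger root of \<open>x\<^sup>2 - T x + D\<close>; complex roots have real part \<open>T / 2\<close>.\<close>
definition upper_root :: "real \<Rightarrow> real \<Rightarrow> real" where
  "upper_root T D = T / 2 + sqrt (max (T\<^sup>2 - 4 * D) 0) / 2"

lemma upper_root_le:
  assumes "T \<le> 2 * x" and "0 \<le> x\<^sup>2 - T * x + D"
  shows "upper_root T D \<le> x"
proof -
  have "T\<^sup>2 - 4 * D \<le> (2 * x - T)\<^sup>2"
    using assms by (simp add: power2_eq_square algebra_simps)
  then have "max (T\<^sup>2 - 4 * D) 0 \<le> (2 * x - T)\<^sup>2"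
    by simp
  then have "sqrt (max (T\<^sup>2 - 4 * D) 0) \<le> 2 * x - T"
    using assms(1) by (intro real_le_lsqrt) auto
  then show ?thesis by (simp add: upper_root_def)
qed

lemma upper_root_less:
  assumes "T < 2 * x" and "0 < x\<^sup>2 - T * x + D"
  shows "upper_root T D < x"
proof -
  have "T\<^sup>2 - 4 * D < (2 * x - T)\<^sup>2"
    using assms by (simp add: power2_eq_square algebra_simps)
  moreover have "0 < (2 * x - T)\<^sup>2"
    using assms(1) by simp
  ultimately have "max (T\<^sup>2 - 4 * D) 0 < (2 * x - T)\<^sup>2"
    by simp
  then have "sqrt (max (T\<^sup>2 - 4 * D) 0) < 2 * x - T"
    using assms(1) by (intro real_less_lsqrt) auto
  then show ?thesis by (simp add: upper_root_def)
qed

lemma upper_root_is_root: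
  assumes "4 * D \<le> T\<^sup>2"
  shows "(upper_root T D)\<^sup>2 - T * upper_root T D + D = 0"
proof -
  have "(sqrt (T\<^sup>2 - 4 * D))\<^sup>2 = T\<^sup>2 - 4 * D" using assms by simp
  then show ?thesis
    using assms by (simp add: upper_root_def power2_eq_square field_simps)
qed

lemma upper_root_pos:
  assumes "D < 0"
  shows "0 < upper_root T D"
proof -
  have "\<bar>T\<bar> < sqrt (T\<^sup>2 - 4 * D)"
    using assms by (intro real_less_rsqrt) simp
  moreover have "max (T\<^sup>2 - 4 * D) 0 = T\<^sup>2 - 4 * D"
    using assms zero_le_power2[of T] by (intro max_absorb1) linarith
  ultimately show ?thesis by (simp add: upper_root_def)
qed

lemma upper_root_zero: "T \<le> 0 \<Longrightarrow> upper_root T 0 = 0"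
  by (simp add: upper_root_def)

lemma Re_csqrt_of_real: "Re (csqrt (complex_of_real d)) = sqrt (max d 0)"
  by (cases "d \<ge> 0") (auto simp: max_def)

lemma Im_csqrt_of_real: "Im (csqrt (complex_of_real d)) = sqrt (max (- d) 0)"
  by (cases "d \<ge> 0") (auto simp: max_def)

definition detM :: "real \<Rightarrow> real \<Rightarrow> real \<Rightarrow> real \<Rightarrow> real \<Rightarrow> real" where
  "detM mu1 mu2 alpha r lam = (mu1 * r + 1) * (mu2 * r + alpha\<^sup>2) - lam * mu2 * r"

definition char_poly :: "real \<Rightarrow> real \<Rightarrow> real \<Rightarrow> real \<Rightarrow> real \<Rightarrow> real \<Rightarrow> real" where
  "char_poly mu1 mu2 alpha r lam x =
     x\<^sup>2 - trM mu1 mu2 alpha r lam * x + detM mu1 mu2 alpha r lam"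

definition char_poly_slope :: "real \<Rightarrow> real \<Rightarrow> real \<Rightarrow> real \<Rightarrow> real \<Rightarrow> real \<Rightarrow> real \<Rightarrow> real" where
  "char_poly_slope mu1 mu2 alpha r0 r lam x =
     mu1 * mu2 * (r + r0) + mu1 * alpha\<^sup>2 + mu2 - lam * mu2 + (mu1 + mu2) * x"

lemma discr_eq: "discr mu1 mu2 alpha r lam = (trM mu1 mu2 alpha r lam)\<^sup>2 - 4 * detM mu1 mu2 alpha r lam"
  by (simp add: discr_def trM_def detM_def algebra_simps power2_eq_square)

lemma char_poly_diff:
  "char_poly mu1 mu2 alpha r lam x - char_poly mu1 mu2 alpha r0 lam x
     = (r - r0) * char_poly_slope mu1 mu2 alpha r0 r lam x"
  by (simp add: char_poly_def char_poly_slope_def trM_def detM_def algebra_simps power2_eq_square)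

lemma trM_shift: "trM mu1 mu2 alpha r lam = trM mu1 mu2 alpha r' lam - (mu1 + mu2) * (r - r')"
  by (simp add: trM_def algebra_simps)

lemma detM_eq_gfun: "0 < mu2 \<Longrightarrow> 0 < r \<Longrightarrow> detM mu1 mu2 alpha r lam = mu2 * r * (gfun mu1 mu2 alpha r - lam)"
  by (simp add: detM_def gfun_def field_simps)

lemma detM_pos:
  assumes "0 < mu2" and "0 < alpha" and "0 \<le> r" and "0 < r \<Longrightarrow> lam < gfun mu1 mu2 alpha r"
  shows "0 < detM mu1 mu2 alpha r lam"
proof (cases "r = 0")
  case True
  then show ?thesis using assms(2) by (simp add: detM_def)
next
  case False
  then show ?thesis using assms by (simp add: detM_eq_gfun)
qed

lemma Re_beta_plus:
  "Re (beta_plus mu1 mu2 alpha r lam) = upper_root (trM mu1 mu2 alpha r lam) (detM mu1 mu2 alpha r lam)"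
  unfolding upper_root_def discr_eq[symmetric] by (simp add: beta_plus_def Re_csqrt_of_real)

lemma Re_beta_minus_le_trM: "Re (beta_minus mu1 mu2 alpha r lam) \<le> trM mu1 mu2 alpha r lam / 2"
  by (simp add: beta_minus_def Re_csqrt_of_real)

lemma Re_beta_minus_le_Re_beta_plus:
  "Re (beta_minus mu1 mu2 alpha r lam) \<le> Re (beta_plus mu1 mu2 alpha r lam)"
  by (simp add: beta_minus_def beta_plus_def Re_csqrt_of_real)

lemma Im_beta_plus_eq_0: "0 \<le> discr mu1 mu2 alpha r lam \<Longrightarrow> Im (beta_plus mu1 mu2 alpha r lam) = 0"
  by (simp add: beta_plus_def Im_csqrt_of_real)

lemma beta_complex_pair:
  assumes "discr mu1 mu2 alpha r lam < 0"
  shows "beta_plus mu1 mu2 alpha r lam = cnj (beta_minus mu1 mu2 alpha r lam)"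
    and "Re (beta_plus mu1 mu2 alpha r lam) = trM mu1 mu2 alpha r lam / 2"
    and "0 < Im (beta_plus mu1 mu2 alpha r lam)"
  using assms by (simp_all add: beta_plus_def beta_minus_def complex_eq_iff
      Re_csqrt_of_real Im_csqrt_of_real)

lemma Re_beta_plus_le:
  "trM mu1 mu2 alpha r lam \<le> 2 * x \<Longrightarrow> 0 \<le> char_poly mu1 mu2 alpha r lam x \<Longrightarrow>
   Re (beta_plus mu1 mu2 alpha r lam) \<le> x"
  unfolding Re_beta_plus char_poly_def by (rule upper_root_le)

lemma Re_beta_plus_less:
  "trM mu1 mu2 alpha r lam < 2 * x \<Longrightarrow> 0 < char_poly mu1 mu2 alpha r lam x \<Longrightarrow>
   Re (beta_plus mu1 mu2 alpha r lam) < x"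
  unfolding Re_beta_plus char_poly_def by (rule upper_root_less)

lemma char_poly_Re_beta_plus:
  "0 \<le> discr mu1 mu2 alpha r lam \<Longrightarrow>
   char_poly mu1 mu2 alpha r lam (Re (beta_plus mu1 mu2 alpha r lam)) = 0"
  unfolding Re_beta_plus char_poly_def by (rule upper_root_is_root) (simp add: discr_eq)

lemma Re_beta_plus_le_of_slope:
  assumes "char_poly mu1 mu2 alpha r0 lam x = 0" and "trM mu1 mu2 alpha r lam \<le> 2 * x"
    and "0 \<le> (r - r0) * char_poly_slope mu1 mu2 alpha r0 r lam x"
  shows "Re (beta_plus mu1 mu2 alpha r lam) \<le> x"
  using assms char_poly_diff[of mu1 mu2 alpha r lam x r0] by (intro Re_beta_plus_le) simp_all

lemma isCont_discr: "isCont (discr mu1 mu2 alpha r) lam"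
  unfolding discr_def by (intro continuous_intros)

lemma isCont_Re_beta_plus: "isCont (\<lambda>lam. Re (beta_plus mu1 mu2 alpha r lam)) lam"
  unfolding Re_beta_plus upper_root_def trM_def detM_def
  by (intro continuous_intros) simp_all

lemma isCont_tendsto_nhds: "isCont f a \<Longrightarrow> (f \<longlongrightarrow> f a) (nhds a)"
  by (simp add: isCont_def tendsto_at_iff_tendsto_nhds)

lemma eventually_nhds_real_abs:
  "eventually P (nhds (a::real)) \<Longrightarrow> \<exists>e>0. \<forall>x. \<bar>x - a\<bar> < e \<longrightarrow> P x"
  unfolding eventually_nhds_metric dist_real_def .

lemma laplace_spectrum_nonneg: "laplace_spectrum b rho \<Longrightarrow> 1 \<le> k \<Longrightarrow> 0 \<le> rho k"
  by (simp add: laplace_spectrum_def)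

lemma laplace_spectrum_mono:
  assumes "laplace_spectrum b rho" and "1 \<le> i" and "i \<le> j"
  shows "rho i \<le> rho j"
  using assms(3)
proof (induction rule: dec_induct)
  case (step n)
  then show ?case
    using assms(1,2) unfolding laplace_spectrum_def by (meson order_trans le_trans)
qed simp

lemma laplace_spectrum_gt_first: "laplace_spectrum b rho \<Longrightarrow> 2 \<le> j \<Longrightarrow> rho 1 < rho j"
  using laplace_spectrum_mono[of b rho 2 j] by (simp add: laplace_spectrum_def)

lemma laplace_spectrum_unbounded: "laplace_spectrum b rho \<Longrightarrow> \<exists>j\<ge>1. r < rho j"
proof -
  assume "laplace_spectrum b rho"
  then have "eventually (\<lambda>j. r < rho j) sequentially"
    unfolding laplace_spectrum_def filterlim_at_top_dense by blast
  then obtain N where "\<And>j. N \<le> j \<Longrightarrow> r < rho j"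
    by (auto simp: eventually_sequentially)
  then show ?thesis by (intro exI[of _ "max N 1"]) auto
qed

locale linearized_problem =
  fixes mu1 mu2 alpha :: real and rho :: "nat \<Rightarrow> real" and b :: bc
  assumes mu1: "0 < mu1" and mu2: "0 < mu2" and alpha: "0 < alpha"
    and spec: "laplace_spectrum b rho"
begin

abbreviation "bp k \<equiv> beta_plus mu1 mu2 alpha (rho k)"
abbreviation "bm k \<equiv> beta_minus mu1 mu2 alpha (rho k)"
abbreviation "l0 \<equiv> lambda0 mu1 mu2 alpha rho"
abbreviation "l1 \<equiv> lambda1 mu1 mu2 alpha rho"

lemma lambda0_le_gfun:
  assumes "1 \<le> j" and "0 < rho j"
  shows "l0 \<le> gfun mu1 mu2 alpha (rho j)"
  unfolding lambda0_def
proof (rule cINF_lower)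
  have "0 \<le> gfun mu1 mu2 alpha r" if "0 < r" for r
    using mu1 mu2 that unfolding gfun_def by (intro divide_nonneg_nonneg mult_nonneg_nonneg) auto
  then show "bdd_below ((\<lambda>k. gfun mu1 mu2 alpha (rho k)) ` {k. 1 \<le> k \<and> 0 < rho k})"
    by (intro bdd_belowI2[where m = 0]) auto
qed (use assms in simp)

lemma trM_le_lambda1: "1 \<le> j \<Longrightarrow> trM mu1 mu2 alpha (rho j) lam \<le> lam - l1"
  using trM_shift[of mu1 mu2 alpha "rho j" lam "rho 1"] laplace_spectrum_mono[OF spec, of 1 j] mu1 mu2
  by (simp add: trM_def lambda1_def)

lemma detM_pos_below_lambda0: "1 \<le> j \<Longrightarrow> lam < l0 \<Longrightarrow> 0 < detM mu1 mu2 alpha (rho j) lam"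
  using lambda0_le_gfun[of j]
  by (intro detM_pos mu2 alpha laplace_spectrum_nonneg[OF spec]) fastforce+

lemma stable_at_lambda1:
  assumes "l1 < l0" and "1 < k"
  shows "Re (bp k l1) < 0 \<and> Re (bm k l1) < 0"
proof -
  have "rho 1 < rho k"
    using laplace_spectrum_gt_first[OF spec] assms(2) by simp
  then have trM_neg: "trM mu1 mu2 alpha (rho k) l1 < 0"
    using trM_shift[of mu1 mu2 alpha "rho k" l1 "rho 1"] mu1 mu2 by (simp add: trM_def lambda1_def)
  have "0 < char_poly mu1 mu2 alpha (rho k) l1 0"
    using detM_pos_below_lambda0 assms by (simp add: char_poly_def)
  with trM_neg have "Re (bp k l1) < 0"
    by (intro Re_beta_plus_less) simp_all
  moreover have "Re (bm k l1) < 0"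
    using Re_beta_minus_le_trM[of mu1 mu2 alpha "rho k" l1] trM_neg by simp
  ultimately show ?thesis ..
qed

text \<open>\<open>rho j * B - x\<^sup>2\<close> is a lower bound for the characteristic polynomial of \<open>M\<^sub>j\<close> at \<open>x\<close>,
  and it is monotone in \<open>rho j\<close> once \<open>B \<ge> 0\<close>.\<close>
lemma Re_beta_plus_le_near_lambda1:
  fixes lam :: real
  defines "x \<equiv> (lam - l1) / 2"
  defines "B \<equiv> mu2 * (l0 - lam) - (mu1 + mu2) * \<bar>x\<bar>"
  assumes "2 \<le> j" and "0 \<le> B" and "x\<^sup>2 \<le> rho 2 * B"
  shows "Re (bp j lam) \<le> x"
proof -
  define r where "r = rho j"
  define s where "s = (mu1 + mu2) * (r - rho 1)"
  have "0 \<le> rho 1" and "rho 1 < rho 2" and "rho 2 \<le> r"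
    using spec laplace_spectrum_mono[OF spec, of 2 j] assms(3)
    unfolding r_def laplace_spectrum_def by auto
  then have r_pos: "0 < r" and s_nonneg: "0 \<le> s" and s_le: "s \<le> (mu1 + mu2) * r"
    using mu1 mu2 unfolding s_def by (auto intro: mult_left_mono)
  have trM_r: "trM mu1 mu2 alpha r lam = 2 * x - s"
    unfolding s_def x_def by (simp add: trM_def lambda1_def field_simps)
  have "\<bar>s * x\<bar> \<le> (mu1 + mu2) * r * \<bar>x\<bar>"
    using mult_right_mono[OF s_le abs_ge_zero[of x]] s_nonneg by (simp add: abs_mult)
  then have "- ((mu1 + mu2) * r * \<bar>x\<bar>) \<le> s * x"
    by linarith
  moreover have "l0 \<le> gfun mu1 mu2 alpha r"
    using lambda0_le_gfun[of j] assms(3) r_pos unfolding r_def by simp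
  then have "mu2 * r * (l0 - lam) \<le> detM mu1 mu2 alpha r lam"
    using mu2 r_pos by (simp add: detM_eq_gfun[OF mu2 r_pos])
  moreover have "rho 2 * B \<le> r * B"
    using \<open>rho 2 \<le> r\<close> assms(4) by (rule mult_right_mono)
  moreover have "r * B = mu2 * r * (l0 - lam) - (mu1 + mu2) * r * \<bar>x\<bar>"
    unfolding B_def by (simp add: algebra_simps)
  ultimately have "0 \<le> char_poly mu1 mu2 alpha r lam x"
    using assms(5) by (simp add: char_poly_def trM_r power2_eq_square algebra_simps)
  moreover have "trM mu1 mu2 alpha r lam \<le> 2 * x"
    using trM_r s_nonneg by simp
  ultimately show ?thesis
    unfolding r_def by (intro Re_beta_plus_le)
qed

lemma eventually_dominates_near_lambda1:
  assumes "l1 < l0"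
  shows "eventually (\<lambda>lam. \<forall>j\<ge>2. Re (bp j lam) \<le> (lam - l1) / 2) (nhds l1)"
proof -
  define B where "B lam = mu2 * (l0 - lam) - (mu1 + mu2) * \<bar>(lam - l1) / 2\<bar>" for lam
  have "0 < rho 2"
    using laplace_spectrum_gt_first[OF spec, of 2] laplace_spectrum_nonneg[OF spec, of 1] by simp
  have cont: "isCont B l1"
    unfolding B_def by (intro continuous_intros) simp
  have "0 < B l1"
    using assms mu2 by (simp add: B_def)
  then have "eventually (\<lambda>lam. 0 < B lam) (nhds l1)"
    by (rule order_tendstoD(1)[OF isCont_tendsto_nhds[OF cont]])
  moreover have "eventually (\<lambda>lam. ((lam - l1) / 2)\<^sup>2 < rho 2 * B lam) (nhds l1)"
  proof -
    have "isCont (\<lambda>lam. rho 2 * B lam - ((lam - l1) / 2)\<^sup>2) l1"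
      by (intro continuous_intros cont) simp
    moreover have "0 < rho 2 * B l1 - ((l1 - l1) / 2)\<^sup>2"
      using \<open>0 < B l1\<close> \<open>0 < rho 2\<close> by simp
    ultimately show ?thesis
      using order_tendstoD(1)[OF isCont_tendsto_nhds] by fastforce
  qed
  ultimately show ?thesis
    by eventually_elim (intro allI impI Re_beta_plus_le_near_lambda1, auto simp: B_def)
qed

lemma first_complex_eigenvalue_pair:
  assumes "l1 < l0"
  shows "(\<exists>\<epsilon>>0. \<forall>lam. 0 < lam \<and> \<bar>lam - l1\<bar> < \<epsilon> \<longrightarrow>
          bp 1 lam = cnj (bm 1 lam) \<and> Im (bp 1 lam) \<noteq> 0 \<and>
          Re (bp 1 lam) = Re (bm 1 lam) \<and>
          (\<forall>j\<ge>1. Re (bp j lam) \<le> Re (bp 1 lam) \<and> Re (bm j lam) \<le> Re (bp 1 lam)) \<and>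
          (lam < l1 \<longrightarrow> Re (bp 1 lam) < 0) \<and>
          (lam = l1 \<longrightarrow> Re (bp 1 lam) = 0) \<and>
          (lam > l1 \<longrightarrow> Re (bp 1 lam) > 0)) \<and>
      (\<forall>k>1. Re (bp k l1) < 0 \<and> Re (bm k l1) < 0)"
proof -
  have trM_1: "trM mu1 mu2 alpha (rho 1) lam = lam - l1" for lam
    by (simp add: trM_def lambda1_def)
  have "discr mu1 mu2 alpha (rho 1) l1 < 0"
    using detM_pos_below_lambda0[of 1 l1] assms trM_1[of l1] by (simp add: discr_eq)
  then have "eventually (\<lambda>lam. discr mu1 mu2 alpha (rho 1) lam < 0) (nhds l1)"
    using order_tendstoD(2)[OF isCont_tendsto_nhds[OF isCont_discr]] by blast
  then have "eventually (\<lambda>lam.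
      bp 1 lam = cnj (bm 1 lam) \<and> Im (bp 1 lam) \<noteq> 0 \<and> Re (bp 1 lam) = Re (bm 1 lam) \<and>
      (\<forall>j\<ge>1. Re (bp j lam) \<le> Re (bp 1 lam) \<and> Re (bm j lam) \<le> Re (bp 1 lam)) \<and>
      (lam < l1 \<longrightarrow> Re (bp 1 lam) < 0) \<and> (lam = l1 \<longrightarrow> Re (bp 1 lam) = 0) \<and>
      (lam > l1 \<longrightarrow> Re (bp 1 lam) > 0)) (nhds l1)"
    using eventually_dominates_near_lambda1[OF assms]
  proof eventually_elim
    case (elim lam)
    note pair = beta_complex_pair[OF elim(1), unfolded trM_1]
    have "Re (bp j lam) \<le> Re (bp 1 lam)" if "1 \<le> j" for j
      using elim(2)[rule_format, of j] pair(2) that by (cases "j = 1") auto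
    moreover have "Re (bm j lam) \<le> Re (bp j lam)" for j
      by (rule Re_beta_minus_le_Re_beta_plus)
    ultimately show ?case
      using pair by (auto intro: order_trans)
  qed
  with stable_at_lambda1[OF assms] show ?thesis
    by (intro conjI) (blast dest: eventually_nhds_real_abs)+
qed

end

locale turing_onset = linearized_problem +
  fixes k0 :: nat
  assumes l0_less_l1: "lambda0 mu1 mu2 alpha rho < lambda1 mu1 mu2 alpha rho"
    and k0: "1 \<le> k0" and rho_k0_pos: "0 < rho k0"
    and gfun_k0: "gfun mu1 mu2 alpha (rho k0) = lambda0 mu1 mu2 alpha rho"
    and minimizer_unique: "\<forall>k\<ge>1. 0 < rho k \<and> gfun mu1 mu2 alpha (rho k) = lambda0 mu1 mu2 alpha rho
      \<longrightarrow> rho k = rho k0"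
begin

abbreviation "re_crit lam \<equiv> Re (bp k0 lam)"

abbreviation "slope j lam \<equiv> char_poly_slope mu1 mu2 alpha (rho k0) (rho j) lam (re_crit lam)"

lemma detM_k0: "detM mu1 mu2 alpha (rho k0) lam = mu2 * rho k0 * (l0 - lam)"
  using detM_eq_gfun[OF mu2 rho_k0_pos] gfun_k0 by simp

lemma trM_k0_neg: "lam < l1 \<Longrightarrow> trM mu1 mu2 alpha (rho k0) lam < 0"
  using trM_le_lambda1[OF k0, of lam] by simp

lemma detM_pos_at_lambda0: "1 \<le> j \<Longrightarrow> rho j \<noteq> rho k0 \<Longrightarrow> 0 < detM mu1 mu2 alpha (rho j) l0"
  using lambda0_le_gfun[of j] minimizer_unique
  by (intro detM_pos mu2 alpha laplace_spectrum_nonneg[OF spec]) force+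

lemma stable_at_lambda0:
  assumes "1 \<le> j"
  shows "Re (bm j l0) < 0 \<and> (rho j \<noteq> rho k0 \<longrightarrow> Re (bp j l0) < 0)"
proof -
  have trM_neg: "trM mu1 mu2 alpha (rho j) l0 < 0"
    using trM_le_lambda1[OF assms, of l0] l0_less_l1 by simp
  have "Re (bp j l0) < 0" if "rho j \<noteq> rho k0"
    using trM_neg detM_pos_at_lambda0[OF assms that]
    by (intro Re_beta_plus_less) (simp_all add: char_poly_def)
  moreover have "Re (bm j l0) < 0"
    using Re_beta_minus_le_trM[of mu1 mu2 alpha "rho j" l0] trM_neg by simp
  ultimately show ?thesis by blast
qed

lemma Re_beta_plus_k0_sign:
  assumes "lam < l1"
  shows "(lam < l0 \<longrightarrow> re_crit lam < 0) \<and> (lam = l0 \<longrightarrow> re_crit lam = 0) \<and> (l0 < lam \<longrightarrow> 0 < re_crit lam)"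
proof (intro conjI impI)
  assume "lam < l0"
  then have "0 < char_poly mu1 mu2 alpha (rho k0) lam 0"
    using mu2 rho_k0_pos by (simp add: char_poly_def detM_k0)
  then show "re_crit lam < 0"
    using trM_k0_neg[OF assms] by (intro Re_beta_plus_less) simp_all
next
  assume "lam = l0"
  then show "re_crit lam = 0"
    using trM_k0_neg[OF assms] by (simp add: Re_beta_plus detM_k0 upper_root_zero)
next
  assume "l0 < lam"
  then show "0 < re_crit lam"
    using mu2 rho_k0_pos
    by (simp add: Re_beta_plus detM_k0 upper_root_pos mult_pos_neg)
qed

lemma re_crit_lambda0: "re_crit l0 = 0"
  using Re_beta_plus_k0_sign[OF l0_less_l1] by simp

lemma slope_sign_at_lambda0:
  assumes "1 \<le> j" and "rho j \<noteq> rho k0"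
  shows "0 < (rho j - rho k0) * slope j l0"
  using char_poly_diff[of mu1 mu2 alpha "rho j" l0 0 "rho k0"] detM_pos_at_lambda0[OF assms]
  by (simp add: re_crit_lambda0 char_poly_def detM_k0)

lemma isCont_slope: "isCont (slope j) lam"
  unfolding char_poly_slope_def by (intro continuous_intros isCont_Re_beta_plus)

lemma eventually_slope_pos_above:
  "eventually (\<lambda>lam. \<forall>j\<ge>1. rho k0 < rho j \<longrightarrow> 0 < slope j lam) (nhds l0)"
proof -
  obtain jp where jp: "1 \<le> jp \<and> rho k0 < rho jp"
    and jp_least: "\<forall>j<jp. \<not> (1 \<le> j \<and> rho k0 < rho j)"
    using laplace_spectrum_unbounded[OF spec, of "rho k0"] exists_least_iff[of "\<lambda>j. 1 \<le> j \<and> rho k0 < rho j"]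
    by blast
  have slope_mono: "slope jp lam \<le> slope j lam" if "1 \<le> j" and "rho k0 < rho j" for j lam
  proof -
    have "rho jp \<le> rho j"
      using jp jp_least that by (intro laplace_spectrum_mono[OF spec]) (auto simp: not_less[symmetric])
    then show ?thesis
      using mu1 mu2 by (simp add: char_poly_slope_def)
  qed
  have "0 < slope jp l0"
    using slope_sign_at_lambda0[of jp] jp by (simp add: zero_less_mult_iff)
  then have "eventually (\<lambda>lam. 0 < slope jp lam) (nhds l0)"
    by (rule order_tendstoD(1)[OF isCont_tendsto_nhds[OF isCont_slope]])
  then show ?thesis
    by eventually_elim (use slope_mono in \<open>auto intro: less_le_trans\<close>)
qed

lemma eventually_slope_neg_below:
  "eventually (\<lambda>lam. \<forall>j\<ge>1. rho j < rho k0 \<longrightarrow> slope j lam < 0) (nhds l0)"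
proof -
  have "eventually (\<lambda>lam. \<forall>j\<in>{1..<k0}. rho j < rho k0 \<longrightarrow> slope j lam < 0) (nhds l0)"
  proof (rule eventually_ball_finite[OF finite_atLeastLessThan], rule ballI)
    fix j assume j: "j \<in> {1..<k0}"
    show "eventually (\<lambda>lam. rho j < rho k0 \<longrightarrow> slope j lam < 0) (nhds l0)"
    proof (cases "rho j < rho k0")
      case True
      then have "slope j l0 < 0"
        using slope_sign_at_lambda0[of j] j by (simp add: zero_less_mult_iff)
      then show ?thesis
        using order_tendstoD(2)[OF isCont_tendsto_nhds[OF isCont_slope]] by (auto elim: eventually_mono)
    qed simp
  qed
  moreover have "j < k0" if "1 \<le> j" and "rho j < rho k0" for j
    using laplace_spectrum_mono[OF spec k0, of j] that by (cases "j < k0") auto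
  ultimately show ?thesis
    by (auto elim: eventually_mono)
qed

lemma eventually_discr_k0_pos: "eventually (\<lambda>lam. 0 < discr mu1 mu2 alpha (rho k0) lam) (nhds l0)"
proof -
  have "0 < discr mu1 mu2 alpha (rho k0) l0"
    using trM_k0_neg[OF l0_less_l1] by (simp add: discr_eq detM_k0)
  then show ?thesis
    by (rule order_tendstoD(1)[OF isCont_tendsto_nhds[OF isCont_discr]])
qed

lemma eventually_dominates_near_lambda0:
  "eventually (\<lambda>lam. \<forall>j\<ge>1. Re (bp j lam) \<le> re_crit lam) (nhds l0)"
proof -
  have "isCont (\<lambda>lam. 2 * re_crit lam - (lam - l1)) l0"
    by (intro continuous_intros isCont_Re_beta_plus)
  moreover have "0 < 2 * re_crit l0 - (l0 - l1)"
    using l0_less_l1 by (simp add: re_crit_lambda0)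
  ultimately have "eventually (\<lambda>lam. 0 < 2 * re_crit lam - (lam - l1)) (nhds l0)"
    using order_tendstoD(1)[OF isCont_tendsto_nhds] by blast
  with eventually_discr_k0_pos eventually_slope_pos_above eventually_slope_neg_below
  show ?thesis
  proof eventually_elim
    case (elim lam)
    show ?case
    proof (intro allI impI)
      fix j :: nat assume j: "1 \<le> j"
      show "Re (bp j lam) \<le> re_crit lam"
      proof (cases "rho j = rho k0")
        case False
        have "0 \<le> (rho j - rho k0) * slope j lam"
          using elim(2)[rule_format, OF j] elim(3)[rule_format, OF j] False
          by (cases "rho j < rho k0") (auto intro: mult_nonpos_nonpos)
        moreover have "trM mu1 mu2 alpha (rho j) lam \<le> 2 * re_crit lam"
          using trM_le_lambda1[OF j, of lam] elim(4) by simp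
        ultimately show ?thesis
          using char_poly_Re_beta_plus elim(1) less_imp_le by (intro Re_beta_plus_le_of_slope) blast+
      qed simp
    qed
  qed
qed

lemma first_real_eigenvalue:
  "(\<exists>\<epsilon>>0. \<forall>lam. 0 < lam \<and> \<bar>lam - l0\<bar> < \<epsilon> \<longrightarrow>
      Im (bp k0 lam) = 0 \<and>
      (\<forall>j\<ge>1. Re (bp j lam) \<le> Re (bp k0 lam) \<and> Re (bm j lam) \<le> Re (bp k0 lam)) \<and>
      (\<forall>k\<ge>1. rho k = rho k0 \<longrightarrow>
         Im (bp k lam) = 0 \<and>
         (lam < l0 \<longrightarrow> Re (bp k lam) < 0) \<and>
         (lam = l0 \<longrightarrow> Re (bp k lam) = 0) \<and>
         (lam > l0 \<longrightarrow> Re (bp k lam) > 0))) \<and>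
   (\<forall>j\<ge>1. Re (bm j l0) < 0 \<and> (rho j \<noteq> rho k0 \<longrightarrow> Re (bp j l0) < 0))"
proof -
  have "eventually (\<lambda>lam. lam < l1) (nhds l0)"
    using l0_less_l1 by (rule order_tendstoD(2)[OF filterlim_ident])
  with eventually_discr_k0_pos eventually_dominates_near_lambda0
  have "eventually (\<lambda>lam.
      Im (bp k0 lam) = 0 \<and>
      (\<forall>j\<ge>1. Re (bp j lam) \<le> Re (bp k0 lam) \<and> Re (bm j lam) \<le> Re (bp k0 lam)) \<and>
      (\<forall>k\<ge>1. rho k = rho k0 \<longrightarrow>
         Im (bp k lam) = 0 \<and>
         (lam < l0 \<longrightarrow> Re (bp k lam) < 0) \<and>
         (lam = l0 \<longrightarrow> Re (bp k lam) = 0) \<and>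
         (lam > l0 \<longrightarrow> Re (bp k lam) > 0))) (nhds l0)"
  proof eventually_elim
    case (elim lam)
    have "Im (bp k0 lam) = 0"
      using elim(1) by (simp add: Im_beta_plus_eq_0)
    moreover have "Re (bm j lam) \<le> Re (bp k0 lam)" if "1 \<le> j" for j
      using elim(2) that Re_beta_minus_le_Re_beta_plus[of mu1 mu2 alpha "rho j" lam]
      by (meson order_trans)
    ultimately show ?case
      using elim Re_beta_plus_k0_sign[OF elim(3)] by auto
  qed
  with stable_at_lambda0 show ?thesis
    by (intro conjI) (blast dest: eventually_nhds_real_abs)+
qed

end

theorem lemma3p1:
  fixes mu1 mu2 alpha :: real and rho :: "nat \<Rightarrow> real" and b :: bc
  assumes mu1: "0 < mu1" and mu2: "0 < mu2" and alpha: "0 < alpha"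
    and spec: "laplace_spectrum b rho"
  defines "bp \<equiv> \<lambda>k lam. beta_plus mu1 mu2 alpha (rho k) lam"
    and "bm \<equiv> \<lambda>k lam. beta_minus mu1 mu2 alpha (rho k) lam"
    and "l0 \<equiv> lambda0 mu1 mu2 alpha rho"
    and "l1 \<equiv> lambda1 mu1 mu2 alpha rho"
  shows
   "(\<forall>k0. l0 < l1 \<and> 1 \<le> k0 \<and> 0 < rho k0 \<and> gfun mu1 mu2 alpha (rho k0) = l0 \<and>
      (\<forall>k\<ge>1. 0 < rho k \<and> gfun mu1 mu2 alpha (rho k) = l0 \<longrightarrow> rho k = rho k0) \<longrightarrow>
      (\<exists>\<epsilon>>0. \<forall>lam. 0 < lam \<and> \<bar>lam - l0\<bar> < \<epsilon> \<longrightarrow>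
          Im (bp k0 lam) = 0 \<and>
          (\<forall>j\<ge>1. Re (bp j lam) \<le> Re (bp k0 lam) \<and> Re (bm j lam) \<le> Re (bp k0 lam)) \<and>
          (\<forall>k\<ge>1. rho k = rho k0 \<longrightarrow>
             Im (bp k lam) = 0 \<and>
             (lam < l0 \<longrightarrow> Re (bp k lam) < 0) \<and>
             (lam = l0 \<longrightarrow> Re (bp k lam) = 0) \<and>
             (lam > l0 \<longrightarrow> Re (bp k lam) > 0))) \<and>
      (\<forall>j\<ge>1. Re (bm j l0) < 0 \<and> (rho j \<noteq> rho k0 \<longrightarrow> Re (bp j l0) < 0)))
    \<and>
    (l1 < l0 \<longrightarrow>
      (\<exists>\<epsilon>>0. \<forall>lam. 0 < lam \<and> \<bar>lam - l1\<bar> < \<epsilon> \<longrightarrow>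
          bp 1 lam = cnj (bm 1 lam) \<and> Im (bp 1 lam) \<noteq> 0 \<and>
          Re (bp 1 lam) = Re (bm 1 lam) \<and>
          (\<forall>j\<ge>1. Re (bp j lam) \<le> Re (bp 1 lam) \<and> Re (bm j lam) \<le> Re (bp 1 lam)) \<and>
          (lam < l1 \<longrightarrow> Re (bp 1 lam) < 0) \<and>
          (lam = l1 \<longrightarrow> Re (bp 1 lam) = 0) \<and>
          (lam > l1 \<longrightarrow> Re (bp 1 lam) > 0)) \<and>
      (\<forall>k>1. Re (bp k l1) < 0 \<and> Re (bm k l1) < 0))"
proof -
  interpret linearized_problem mu1 mu2 alpha rho b
    using mu1 mu2 alpha spec by unfold_locales
  have turing: "turing_onset mu1 mu2 alpha rho b k0"
    if "l0 < l1 \<and> 1 \<le> k0 \<and> 0 < rho k0 \<and> gfun mu1 mu2 alpha (rho k0) = l0 \<and>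
      (\<forall>k\<ge>1. 0 < rho k \<and> gfun mu1 mu2 alpha (rho k) = l0 \<longrightarrow> rho k = rho k0)" for k0
    using that unfolding l0_def l1_def by unfold_locales auto
  show ?thesis
    unfolding bp_def bm_def
    using turing_onset.first_real_eigenvalue[OF turing, folded l0_def l1_def]
      first_complex_eigenvalue_pair[folded l0_def l1_def]
    by blast
qed

end
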